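(* Let $\mathbf{C}$ and $\mathbf{D}$ be categories and let $F : \mathrm{Ob}(\mathbf{D}) \rightleftarrows \mathrm{Ob}(\mathbf{C}) : G$ be a pre-adjunction between $\mathbf{C}$ and $\mathbf{D}$, with family of maps $\Phi_{\mathcal{Y},\mathcal{X}} : \hom_\mathbf{C}(F(\mathcal{Y}), \mathcal{X}) \to \hom_\mathbf{D}(\mathcal{Y}, G(\mathcal{X}))$. If $\mathbf{C}$ has the Ramsey property, then $\mathbf{D}$ has the Ramsey property.
   Context: For a category $\mathbf{C}$, an integer $k\ge 2$ and objects $\mathcal{A},\mathcal{B},\mathcal{C}$, write $\mathcal{C}\longrightarrow(\mathcal{B})^{\mathcal{A}}_k$ if for every partition $\hom_\mathbf{C}(\mathcal{A},\mathcal{C})=\Sigma_1\cup\dots\cup\Sigma_k$ into pairwise disjoint sets there are $i\in\{1,\dots,k\}$ and $w\in\hom_\mathbf{C}(\mathcal{B},\mathcal{C})$ with $w\cdot\hom_\mathbf{C}(\mathcal{A},\mathcal{B})\subseteq\Sigma_i$. A category $\mathbf{C}$ has the Ramsey property if for every integer $k\ge2$ and all objects $\mathcal{A},\mathcal{B}$ with $\hom_\mathbf{C}(\mathcal{A},\mathcal{B})\neq\varnothing$ there is an object $\mathcal{C}$ with $\mathcal{C}\longrightarrow(\mathcal{B})^{\mathcal{A}}_k$. A pre-adjunction between categories $\mathbf{C}$ and $\mathbf{D}$ is a pair of maps (not necessarily functors) $F:\mathrm{Ob}(\mathbf{D})\to\mathrm{Ob}(\mathbf{C})$ and $G:\mathrm{Ob}(\mathbf{C})\to\mathrm{Ob}(\mathbf{D})$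 together with a family of maps (not necessarily natural or bijective) $\Phi_{\mathcal{Y},\mathcal{X}}:\hom_\mathbf{C}(F(\mathcal{Y}),\mathcal{X})\to\hom_\mathbf{D}(\mathcal{Y},G(\mathcal{X}))$, indexed by all pairs $(\mathcal{Y},\mathcal{X})\in\mathrm{Ob}(\mathbf{D})\times\mathrm{Ob}(\mathbf{C})$ with $\hom_\mathbf{C}(F(\mathcal{Y}),\mathcal{X})\ne\varnothing$, satisfying: (PA) for every $\mathcal{C}\in\mathrm{Ob}(\mathbf{C})$, all $\mathcal{D},\mathcal{E}\in\mathrm{Ob}(\mathbf{D})$, every $u\in\hom_\mathbf{C}(F(\mathcal{D}),\mathcal{C})$ and every $f\in\hom_\mathbf{D}(\mathcal{E},\mathcal{D})$ there is $v\in\hom_\mathbf{C}(F(\mathcal{E}),F(\mathcal{D}))$ with $\Phi_{\mathcal{D},\mathcal{C}}(u)\cdot f=\Phi_{\mathcal{E},\mathcal{C}}(u\cdot v)$. *)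

theory Defs
  imports Main
begin

text \<open>A (possibly large-hom) category presented by its class of objects, hom-sets,
composition (comp g f = g \<cdot> f, i.e. first f then g) and identities.\<close>

record ('o, 'm) category =
  Ob :: "'o set"
  Hom :: "'o \<Rightarrow> 'o \<Rightarrow> 'm set"
  comp :: "'m \<Rightarrow> 'm \<Rightarrow> 'm"
  idm :: "'o \<Rightarrow> 'm"

definition is_category :: "('o, 'm) category \<Rightarrow> bool" where
  "is_category C \<longleftrightarrow>
     (\<forall>a\<in>Ob C. \<forall>b\<in>Ob C. \<forall>c\<in>Ob C. \<forall>f\<in>Hom C a b. \<forall>g\<in>Hom C b c.
        comp C g f \<in> Hom C a c) \<and>
     (\<forall>a\<in>Ob C. \<forall>b\<in>Ob C. \<forall>c\<in>Ob C. \<forall>d\<in>Ob C.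
        \<forall>f\<in>Hom C a b. \<forall>g\<in>Hom C b c. \<forall>h\<in>Hom C c d.
        comp C h (comp C g f) = comp C (comp C h g) f) \<and>
     (\<forall>a\<in>Ob C. idm C a \<in> Hom C a a) \<and>
     (\<forall>a\<in>Ob C. \<forall>b\<in>Ob C. \<forall>f\<in>Hom C a b.
        comp C (idm C b) f = f \<and> comp C f (idm C a) = f) \<and>
     (\<forall>a\<in>Ob C. \<forall>b\<in>Ob C. \<forall>c\<in>Ob C. \<forall>d\<in>Ob C.
        Hom C a b \<inter> Hom C c d \<noteq> {} \<longrightarrow> a = c \<and> b = d)"

definition ramsey_arrow ::
  "('o, 'm) category \<Rightarrow> 'o \<Rightarrow> 'o \<Rightarrow> 'o \<Rightarrow> nat \<Rightarrow> bool" where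
  "ramsey_arrow C Z B A k \<longleftrightarrow>
     (\<forall>\<Sigma> :: nat \<Rightarrow> 'm set.
        (\<Union>i\<in>{1..k}. \<Sigma> i) = Hom C A Z \<and>
        (\<forall>i\<in>{1..k}. \<forall>j\<in>{1..k}. i \<noteq> j \<longrightarrow> \<Sigma> i \<inter> \<Sigma> j = {})
        \<longrightarrow> (\<exists>i\<in>{1..k}. \<exists>w\<in>Hom C B Z. (\<lambda>f. comp C w f) ` Hom C A B \<subseteq> \<Sigma> i))"

definition ramsey_property :: "('o, 'm) category \<Rightarrow> bool" where
  "ramsey_property C \<longleftrightarrow>
     (\<forall>k::nat. k \<ge> 2 \<longrightarrow> (\<forall>A\<in>Ob C. \<forall>B\<in>Ob C. Hom C A B \<noteq> {} \<longrightarrow>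
        (\<exists>Z\<in>Ob C. ramsey_arrow C Z B A k)))"

definition pre_adjunction ::
  "('oc, 'mc) category \<Rightarrow> ('od, 'md) category \<Rightarrow> ('od \<Rightarrow> 'oc) \<Rightarrow> ('oc \<Rightarrow> 'od)
     \<Rightarrow> ('od \<Rightarrow> 'oc \<Rightarrow> 'mc \<Rightarrow> 'md) \<Rightarrow> bool" where
  "pre_adjunction C D F G \<Phi> \<longleftrightarrow>
     (\<forall>Y\<in>Ob D. F Y \<in> Ob C) \<and>
     (\<forall>X\<in>Ob C. G X \<in> Ob D) \<and>
     (\<forall>Y\<in>Ob D. \<forall>X\<in>Ob C. Hom C (F Y) X \<noteq> {} \<longrightarrow>
        (\<forall>u\<in>Hom C (F Y) X. \<Phi> Y X u \<in> Hom D Y (G X))) \<and>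
     (\<forall>X\<in>Ob C. \<forall>Y\<in>Ob D. \<forall>E\<in>Ob D. \<forall>u\<in>Hom C (F Y) X. \<forall>f\<in>Hom D E Y.
        \<exists>v\<in>Hom C (F E) (F Y). comp D (\<Phi> Y X u) f = \<Phi> E X (comp C u v))"

end

theory Submission
  imports Defs
begin

text \<open>Given a partition of hom(A, G X) into k classes, pull it back along Phi to a partition
of hom(F A, X). A Ramsey witness w : F B \<rightarrow> X for the pulled-back colouring yields the witness
Phi w : B \<rightarrow> G X, because by (PA) every composite Phi w \<cdot> f with f : A \<rightarrow> B equals Phi (w \<cdot> v)
for some v : F A \<rightarrow> F B, which lies in the chosen class. The hypothesis hom(F A, F B) \<noteq> {}
needed to apply the Ramsey property of C comes from (PA) applied to the identity of F B.\<close>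

definition k_partition :: "nat \<Rightarrow> (nat \<Rightarrow> 'a set) \<Rightarrow> 'a set \<Rightarrow> bool" where
  "k_partition k \<Sigma> S \<longleftrightarrow>
     (\<Union>i\<in>{1..k}. \<Sigma> i) = S \<and> (\<forall>i\<in>{1..k}. \<forall>j\<in>{1..k}. i \<noteq> j \<longrightarrow> \<Sigma> i \<inter> \<Sigma> j = {})"

lemma ramsey_arrow_iff_k_partition:
  "ramsey_arrow C Z B A k \<longleftrightarrow>
     (\<forall>\<Sigma>. k_partition k \<Sigma> (Hom C A Z) \<longrightarrow>
        (\<exists>i\<in>{1..k}. \<exists>w\<in>Hom C B Z. comp C w ` Hom C A B \<subseteq> \<Sigma> i))"
  unfolding ramsey_arrow_def k_partition_def by simp

lemma k_partition_vimage:
  assumes "k_partition k \<Sigma> S" and "h ` T \<subseteq> S"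
  shows "k_partition k (\<lambda>i. T \<inter> h -` \<Sigma> i) T"
  using assms unfolding k_partition_def by blast

lemma pre_adjunctionD:
  assumes "pre_adjunction C D F G \<Phi>"
  shows pre_adjunction_F_Ob: "Y \<in> Ob D \<Longrightarrow> F Y \<in> Ob C"
    and pre_adjunction_G_Ob: "X \<in> Ob C \<Longrightarrow> G X \<in> Ob D"
    and pre_adjunction_Phi_Hom:
      "\<lbrakk>Y \<in> Ob D; X \<in> Ob C; u \<in> Hom C (F Y) X\<rbrakk> \<Longrightarrow> \<Phi> Y X u \<in> Hom D Y (G X)"
    and pre_adjunction_comp:
      "\<lbrakk>X \<in> Ob C; Y \<in> Ob D; E \<in> Ob D; u \<in> Hom C (F Y) X; f \<in> Hom D E Y\<rbrakk>
        \<Longrightarrow> \<exists>v\<in>Hom C (F E) (F Y). comp D (\<Phi> Y X u) f = \<Phi> E X (comp C u v)"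
  using assms unfolding pre_adjunction_def by blast+

lemma pre_adjunction_Hom_nonempty:
  assumes "is_category C" and "pre_adjunction C D F G \<Phi>"
    and "A \<in> Ob D" and "B \<in> Ob D" and "Hom D A B \<noteq> {}"
  shows "Hom C (F A) (F B) \<noteq> {}"
proof -
  obtain f where f: "f \<in> Hom D A B" using assms(5) by blast
  have FB: "F B \<in> Ob C" using pre_adjunction_F_Ob[OF assms(2,4)] .
  then have "idm C (F B) \<in> Hom C (F B) (F B)"
    using assms(1) unfolding is_category_def by blast
  then show ?thesis
    using pre_adjunction_comp[OF assms(2) FB assms(4,3) _ f] by blast
qed

lemma pre_adjunction_ramsey_arrow:
  assumes adj: "pre_adjunction C D F G \<Phi>"
    and X: "X \<in> Ob C" and A: "A \<in> Ob D" and B: "B \<in> Ob D"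
    and arrow: "ramsey_arrow C X (F B) (F A) k"
  shows "ramsey_arrow D (G X) B A k"
  unfolding ramsey_arrow_iff_k_partition
proof (intro allI impI)
  fix \<Sigma> assume part: "k_partition k \<Sigma> (Hom D A (G X))"
  let ?\<Sigma>' = "\<lambda>i. Hom C (F A) X \<inter> \<Phi> A X -` \<Sigma> i"
  have "\<Phi> A X ` Hom C (F A) X \<subseteq> Hom D A (G X)"
    using pre_adjunction_Phi_Hom[OF adj A X] by blast
  with part have "k_partition k ?\<Sigma>' (Hom C (F A) X)"
    by (rule k_partition_vimage)
  with arrow obtain i w where i: "i \<in> {1..k}" and w: "w \<in> Hom C (F B) X"
    and w_mono: "comp C w ` Hom C (F A) (F B) \<subseteq> ?\<Sigma>' i"
    unfolding ramsey_arrow_iff_k_partition by blast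
  have "comp D (\<Phi> B X w) ` Hom D A B \<subseteq> \<Sigma> i"
  proof
    fix y assume "y \<in> comp D (\<Phi> B X w) ` Hom D A B"
    then obtain f where f: "f \<in> Hom D A B" and y: "y = comp D (\<Phi> B X w) f" by blast
    obtain v where v: "v \<in> Hom C (F A) (F B)" and "y = \<Phi> A X (comp C w v)"
      using pre_adjunction_comp[OF adj X B A w f] y by blast
    with w_mono show "y \<in> \<Sigma> i" by blast
  qed
  moreover have "\<Phi> B X w \<in> Hom D B (G X)"
    using pre_adjunction_Phi_Hom[OF adj B X w] .
  ultimately show "\<exists>i\<in>{1..k}. \<exists>w\<in>Hom D B (G X). comp D w ` Hom D A B \<subseteq> \<Sigma> i"
    using i by blast
qed

theorem theorem3p2:
  fixes C :: "('oc, 'mc) category" and D :: "('od, 'md) category"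
    and F :: "'od \<Rightarrow> 'oc" and G :: "'oc \<Rightarrow> 'od" and \<Phi> :: "'od \<Rightarrow> 'oc \<Rightarrow> 'mc \<Rightarrow> 'md"
  assumes "is_category C" and "is_category D"
    and "pre_adjunction C D F G \<Phi>"
    and "ramsey_property C"
  shows "ramsey_property D"
  unfolding ramsey_property_def
proof (intro allI impI ballI)
  fix k :: nat and A B
  assume k: "2 \<le> k" and A: "A \<in> Ob D" and B: "B \<in> Ob D" and "Hom D A B \<noteq> {}"
  then have "Hom C (F A) (F B) \<noteq> {}"
    using pre_adjunction_Hom_nonempty[OF assms(1,3)] by blast
  then obtain X where X: "X \<in> Ob C" and "ramsey_arrow C X (F B) (F A) k"
    using assms(4) k pre_adjunction_F_Ob[OF assms(3)] A B unfolding ramsey_property_def by blast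
  then have "ramsey_arrow D (G X) B A k"
    using pre_adjunction_ramsey_arrow[OF assms(3) X A B] by blast
  then show "\<exists>Z\<in>Ob D. ramsey_arrow D Z B A k"
    using pre_adjunction_G_Ob[OF assms(3) X] by blast
qed

end
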